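(* Let $C = a_1, \dots, a_h, a_1$ and $D = b_1,\dots,b_g,b_1$ be two distinct cycles of an optimal (minimum-weight) cycle cover of the distance graph $G_S$, and let $e=\langle a_1,\dots,a_h\rangle$ and $f=\langle b_1,\dots,b_g\rangle$. Then $e$ and $f$ are inequivalent. Moreover, each of the pairs $(e,\bar f^R)$, $(\bar e^R, f)$ and $(\bar e^R,\bar f^R)$ is inequivalent.
   Context: Alphabet $\Sigma=\{\texttt a,\texttt t,\texttt g,\texttt c\}$ with complement $\bar{\texttt a}=\texttt t$, $\bar{\texttt t}=\texttt a$, $\bar{\texttt g}=\texttt c$, $\bar{\texttt c}=\texttt g$; the reverse complement of $s=b_1\cdots b_n$ is $\bar{s}^R=\bar{b_n}\cdots\bar{b_1}$. $S=\{s_1,\dots,s_m\}$ is a finite set of strings over $\Sigma$ such that no string of $S\cup\bar S^R$ is a substring of another, where $\bar S^R=\{\bar s^R: s\in S\}$. For strings $x,y$, $\mathrm{ov}(x,y)$ is the length of the longest $v$ with $x=uv$, $y=vw$ for nonempty $u,w$; $\mathrm{pref}(x,y)=u$; $\mathrm{dist}(x,y)=|x|-\mathrm{ov}(x,y)$; $\langle x_1,\dots,x_r\rangle=\mathrm{pref}(x_1,x_2)\cdots\mathrm{pref}(x_{r-1},x_r)\,x_r$. The distance graph $G_S$ is the complete directed graph (with loops) on vertex set $S\cup\bar S^R$ with edge weights $w(x,y)=\mathrm{dist}(x,y)$. A cycle $x_1,\dots,x_r,x_1$ (distinct vertices, $r\ge1$) has weight $\sum_{i=1}^r\mathrm{dist}(x_i,x_{i+1})$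 with $x_{r+1}=x_1$. A cycle cover of $G_S$ is a set of vertex-disjoint cycles such that for each $i$ exactly one of $s_i,\bar{s_i}^R$ lies on the cycles; it is optimal if it has minimum total weight. For a finite string $s$, $\mathrm{factor}(s)$ is the shortest string $x$ with $s=x^iy$ for some integer $i\ge1$ and some (possibly empty) prefix $y$ of $x$, and $\mathrm{period}(s)=|\mathrm{factor}(s)|$. Two strings $x,y$ are equivalent if $\mathrm{factor}(y)$ is a cyclic shift of $\mathrm{factor}(x)$ (i.e. $\mathrm{factor}(x)=pq$, $\mathrm{factor}(y)=qp$ for some strings $p,q$), and inequivalent otherwise. *)

theory Defs
  imports Main "HOL-Library.Sublist"
begin

datatype nuc = Na | Nt | Ng | Nc

fun comp :: "nuc \<Rightarrow> nuc" where
  "comp Na = Nt" | "comp Nt = Na" | "comp Ng = Nc" | "comp Nc = Ng"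

definition rc :: "nuc list \<Rightarrow> nuc list" where
  "rc s = rev (map comp s)"

text \<open>Length of the longest v with x = u v, y = v w, u and w nonempty.\<close>
definition ov :: "'a list \<Rightarrow> 'a list \<Rightarrow> nat" where
  "ov x y = Max {k. k < length x \<and> k < length y \<and> drop (length x - k) x = take k y}"

definition pref :: "'a list \<Rightarrow> 'a list \<Rightarrow> 'a list" where
  "pref x y = take (length x - ov x y) x"

definition dist :: "'a list \<Rightarrow> 'a list \<Rightarrow> nat" where
  "dist x y = length x - ov x y"

fun merge :: "'a list list \<Rightarrow> 'a list" where
  "merge [] = []"
| "merge [x] = x"
| "merge (x # y # zs) = pref x y @ merge (y # zs)"

definition vertices :: "nuc list set \<Rightarrow> nuc list set" where
  "vertices S = S \<union> rc ` S"

definition substring_free :: "nuc list set \<Rightarrow> bool" where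
  "substring_free S \<longleftrightarrow>
     (\<forall>x\<in>vertices S. \<forall>y\<in>vertices S. x \<noteq> y \<longrightarrow> \<not> sublist x y)"

text \<open>A cycle x_1,...,x_r,x_1 is represented by the list [x_1,...,x_r].\<close>
definition cycle_weight :: "nuc list list \<Rightarrow> nat" where
  "cycle_weight c = (\<Sum>i<length c. dist (c ! i) (c ! ((i + 1) mod length c)))"

definition is_cycle :: "nuc list set \<Rightarrow> nuc list list \<Rightarrow> bool" where
  "is_cycle S c \<longleftrightarrow> c \<noteq> [] \<and> distinct c \<and> set c \<subseteq> vertices S"

definition cycle_cover :: "nuc list set \<Rightarrow> nuc list list set \<Rightarrow> bool" where
  "cycle_cover S CC \<longleftrightarrow>
     finite CC \<and> (\<forall>c\<in>CC. is_cycle S c)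
     \<and> (\<forall>c\<in>CC. \<forall>d\<in>CC. c \<noteq> d \<longrightarrow> set c \<inter> set d = {})
     \<and> (\<forall>s\<in>S. let U = (\<Union>c\<in>CC. set c) in
           (s \<in> U \<or> rc s \<in> U) \<and> (s \<noteq> rc s \<longrightarrow> \<not> (s \<in> U \<and> rc s \<in> U)))"

definition cover_weight :: "nuc list list set \<Rightarrow> nat" where
  "cover_weight CC = (\<Sum>c\<in>CC. cycle_weight c)"

definition optimal_cycle_cover :: "nuc list set \<Rightarrow> nuc list list set \<Rightarrow> bool" where
  "optimal_cycle_cover S CC \<longleftrightarrow> cycle_cover S CC \<and>
     (\<forall>CC'. cycle_cover S CC' \<longrightarrow> cover_weight CC \<le> cover_weight CC')"

definition factor_decomp :: "'a list \<Rightarrow> 'a list \<Rightarrow> bool" where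
  "factor_decomp x s \<longleftrightarrow> (\<exists>i y. i \<ge> 1 \<and> prefix y x \<and> s = concat (replicate i x) @ y)"

definition factor :: "'a list \<Rightarrow> 'a list" where
  "factor s = (ARG_MIN length x. factor_decomp x s)"

definition period :: "'a list \<Rightarrow> nat" where
  "period s = length (factor s)"

definition equivalent :: "'a list \<Rightarrow> 'a list \<Rightarrow> bool" where
  "equivalent x y \<longleftrightarrow> (\<exists>p q. factor x = p @ q \<and> factor y = q @ p)"

end

theory Submission
  imports Defs
begin

text \<open>
  If the merge \<open>e\<close> of a cycle \<open>C\<close> were equivalent to the merge \<open>f\<close> of \<open>D\<close>, or to its reverse
  complement, both would be factors of one infinite word of period \<open>p = period e\<close>, and
  \<open>p \<le> w(C)\<close> because \<open>e\<close> repeats itself after \<open>w(C)\<close> letters.  Every string of \<open>C\<close> and \<open>D\<close>,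
  reverse complemented where needed, occurs in that word, and since none is a substring of another
  their occurrences start at distinct offsets modulo \<open>p\<close>.  Visiting the strings in the order of
  these offsets gives one cycle whose distances are bounded by the gaps between consecutive
  offsets, so its weight is at most \<open>p < w(C) + w(D)\<close>.  Replacing \<open>C\<close> and \<open>D\<close> by this cycle
  keeps exactly one orientation of every string, so it is a cheaper cycle cover.
\<close>

subsection \<open>Overlaps and merges\<close>

lemma finite_overlaps: "finite {k. k < length x \<and> k < length y \<and> drop (length x - k) x = take k y}"
  by (rule finite_subset[of _ "{..<length x}"]) auto

lemma ov_ge:
  assumes "k < length x" "k < length y" "drop (length x - k) x = take k y"
  shows "k \<le> ov x y"
  unfolding ov_def using assms finite_overlaps by (intro Max_ge) auto

lemma ov_overlap:
  assumes "x \<noteq> []" "y \<noteq> []"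
  shows "ov x y < length x" and "drop (length x - ov x y) x = take (ov x y) y"
proof -
  let ?K = "{k. k < length x \<and> k < length y \<and> drop (length x - k) x = take k y}"
  have "0 \<in> ?K" using assms by auto
  then have "ov x y \<in> ?K" unfolding ov_def using finite_overlaps by (intro Max_in) auto
  then show "ov x y < length x" "drop (length x - ov x y) x = take (ov x y) y" by auto
qed

lemma dist_pos: "x \<noteq> [] \<Longrightarrow> y \<noteq> [] \<Longrightarrow> 0 < dist x y"
  using ov_overlap(1) unfolding dist_def by fastforce

lemma length_pref: "length (pref x y) = dist x y"
  unfolding pref_def dist_def by simp

lemma prefix_pref_append:
  assumes "x \<noteq> []" "y \<noteq> []"
  shows "prefix x (pref x y @ y)"
proof -
  have "x = pref x y @ drop (length x - ov x y) x"
    unfolding pref_def by simp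
  then show ?thesis using ov_overlap(2)[OF assms] by (metis prefix_append take_is_prefix)
qed

fun pref_chain :: "'a list list \<Rightarrow> 'a list" where
  "pref_chain (x # y # zs) = pref x y @ pref_chain (y # zs)"
| "pref_chain _ = []"

lemma merge_eq_pref_chain: "xs \<noteq> [] \<Longrightarrow> merge xs = pref_chain xs @ last xs"
  by (induction xs rule: pref_chain.induct) auto

lemma pref_chain_snoc: "xs \<noteq> [] \<Longrightarrow> pref_chain (xs @ [y]) = pref_chain xs @ pref (last xs) y"
  by (induction xs rule: pref_chain.induct) auto

lemma length_pref_chain:
  "length (pref_chain xs) = (\<Sum>k<length xs - 1. dist (xs ! k) (xs ! (k + 1)))"
proof (induction xs rule: pref_chain.induct)
  case (1 x y zs)
  then show ?case by (simp add: length_pref sum.lessThan_Suc_shift del: sum.lessThan_Suc)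
qed auto

lemma prefix_merge: "\<forall>z\<in>set (x # xs). z \<noteq> [] \<Longrightarrow> prefix x (merge (x # xs))"
proof (induction xs arbitrary: x)
  case (Cons y zs)
  then have "prefix (pref x y @ y) (merge (x # y # zs))" by simp
  moreover have "prefix x (pref x y @ y)" using Cons.prems by (intro prefix_pref_append) auto
  ultimately show ?case by (auto intro: prefix_order.trans)
qed simp

lemma sublist_merge: "\<forall>z\<in>set xs. z \<noteq> [] \<Longrightarrow> x \<in> set xs \<Longrightarrow> sublist x (merge xs)"
proof (induction xs rule: pref_chain.induct)
  case (1 a b zs)
  show ?case
  proof (cases "x = a")
    case True
    then show ?thesis using 1(2) prefix_merge[of a "b # zs"] prefix_imp_sublist by blast
  next
    case False
    then show ?thesis using 1 by (simp add: sublist_append)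
  qed
qed auto

lemma prefix_merge_snoc:
  assumes "xs \<noteq> []" "\<forall>z\<in>set (y # xs). z \<noteq> []"
  shows "prefix (merge xs) (merge (xs @ [y]))"
proof -
  have "prefix (last xs) (pref (last xs) y @ y)"
    using assms by (intro prefix_pref_append) auto
  then show ?thesis
    using assms(1) by (simp add: merge_eq_pref_chain pref_chain_snoc)
qed

subsection \<open>Periods and cycle weights\<close>

lemma prefix_nth: "prefix x y \<Longrightarrow> k < length x \<Longrightarrow> y ! k = x ! k"
  by (auto simp: prefix_def nth_append)

definition has_period :: "'a list \<Rightarrow> nat \<Rightarrow> bool" where
  "has_period s w \<longleftrightarrow> (\<forall>k. k + w < length s \<longrightarrow> s ! k = s ! (k + w))"

lemma has_period_prefix: "prefix s t \<Longrightarrow> has_period t w \<Longrightarrow> has_period s w"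
  unfolding has_period_def prefix_def by (metis add_lessD1 nth_append_left trans_less_add1 length_append)

lemma has_period_rc: "has_period s w \<Longrightarrow> has_period (rc s) w"
  unfolding has_period_def rc_def
  by (auto simp: rev_nth)

lemma has_period_nth_mod:
  assumes "has_period s w" "0 < w" "k < length s"
  shows "s ! k = s ! (k mod w)"
  using assms(3)
proof (induction k rule: less_induct)
  case (less k)
  show ?case
  proof (cases "k < w")
    case False
    then have "s ! k = s ! (k - w)"
      using assms(1) less.prems unfolding has_period_def by (metis le_add_diff_inverse2 not_less)
    also have "\<dots> = s ! (k mod w)"
      using less assms(2) False by (simp add: le_mod_geq)
    finally show ?thesis .
  qed simp
qed

lemma sum_lessThan_Suc_mod:
  assumes "0 < n"
  shows "(\<Sum>k<n. f (Suc k mod n)) = (\<Sum>k<n. f k)"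
proof -
  obtain m where n: "n = Suc m" using assms gr0_implies_Suc by blast
  have "(\<Sum>k<n. f (Suc k mod n)) = (\<Sum>k<m. f (Suc k)) + f 0"
    unfolding n by (simp add: sum.lessThan_Suc)
  also have "\<dots> = (\<Sum>k<n. f k)"
    unfolding n sum.lessThan_Suc_shift by (simp add: add.commute)
  finally show ?thesis .
qed

lemma cycle_weight_rotate1: "cycle_weight (rotate1 c) = cycle_weight c"
proof (cases "c = []")
  case False
  let ?n = "length c"
  have "cycle_weight (rotate1 c)
      = (\<Sum>k<?n. dist (c ! (Suc k mod ?n)) (c ! ((Suc k mod ?n + 1) mod ?n)))"
    unfolding cycle_weight_def using False by (intro sum.cong) (auto simp: nth_rotate1 mod_Suc_eq)
  also have "\<dots> = cycle_weight c"
    unfolding cycle_weight_def using False by (intro sum_lessThan_Suc_mod) simp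
  finally show ?thesis .
qed simp

lemma cycle_weight_rotate: "cycle_weight (rotate i c) = cycle_weight c"
  by (induction i) (simp_all add: cycle_weight_rotate1)

lemma cycle_weight_eq_length_pref_chain:
  assumes "c \<noteq> []"
  shows "cycle_weight c = length (pref_chain (c @ [hd c]))"
proof -
  have "dist ((c @ [hd c]) ! k) ((c @ [hd c]) ! (k + 1)) = dist (c ! k) (c ! ((k + 1) mod length c))"
    if "k < length c" for k
  proof -
    from that consider "Suc k < length c" | "Suc k = length c" by linarith
    then show ?thesis by cases (auto simp: nth_append hd_conv_nth assms)
  qed
  then show ?thesis unfolding length_pref_chain cycle_weight_def by simp
qed

lemma cycle_weight_pos:
  assumes "c \<noteq> []" "\<forall>z\<in>set c. z \<noteq> []"
  shows "0 < cycle_weight c"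
proof -
  have "c ! 0 \<in> set c" "c ! (1 mod length c) \<in> set c"
    using assms(1) by (metis length_greater_0_conv mod_less_divisor nth_mem)+
  then have "0 < dist (c ! 0) (c ! (1 mod length c))"
    using assms(2) by (intro dist_pos) auto
  also have "\<dots> \<le> cycle_weight c"
    unfolding cycle_weight_def using assms(1)
    member_le_sum[of 0 "{..<length c}" "\<lambda>i. dist (c ! i) (c ! ((i + 1) mod length c))"] by simp
  finally show ?thesis .
qed

lemma has_period_merge:
  assumes "cs \<noteq> []" "\<forall>z\<in>set cs. z \<noteq> []"
  shows "has_period (merge cs) (cycle_weight cs)"
proof -
  let ?a = "hd cs"
  let ?t = "merge (cs @ [?a])"
  have a: "?a \<in> set cs" using assms(1) by simp
  have t: "?t = pref_chain (cs @ [?a]) @ ?a"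
    by (simp add: merge_eq_pref_chain)
  \<comment> \<open>\<open>?t\<close> starts with \<open>?a\<close> and ends with it \<open>cycle_weight cs\<close> letters later\<close>
  have "prefix ?a ?t"
    using assms prefix_merge[of ?a "tl cs @ [?a]"] by (cases cs) auto
  then have "has_period ?t (cycle_weight cs)"
    unfolding has_period_def cycle_weight_eq_length_pref_chain[OF assms(1)]
    by (auto simp: t nth_append prefix_nth[of ?a ?t, unfolded t, symmetric])
  moreover have "prefix (merge cs) ?t"
    using assms a by (intro prefix_merge_snoc) auto
  ultimately show ?thesis by (rule has_period_prefix[rotated])
qed

subsection \<open>Factors\<close>

lemma nth_concat_replicate:
  "k < i * length x \<Longrightarrow> concat (replicate i x) ! k = x ! (k mod length x)"
proof (induction i arbitrary: k)
  case (Suc i)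
  then show ?case
    by (cases "k < length x") (auto simp: nth_append le_mod_geq)
qed simp

lemma factor_decompD:
  assumes "factor_decomp x s" "s \<noteq> []"
  shows "x \<noteq> []" "length x \<le> length s" "k < length s \<Longrightarrow> s ! k = x ! (k mod length x)"
proof -
  obtain i y where i: "1 \<le> i" and y: "prefix y x" and s: "s = concat (replicate i x) @ y"
    using assms(1) unfolding factor_decomp_def by blast
  show "x \<noteq> []" using assms(2) s y by auto
  have lc: "length (concat (replicate i x)) = i * length x"
    by (simp add: length_concat sum_list_replicate)
  have "1 * length x \<le> i * length x" using i by (rule mult_le_mono1)
  then show "length x \<le> length s" using s lc by (simp only: length_append mult_1)
  assume k: "k < length s"
  show "s ! k = x ! (k mod length x)"
  proof (cases "k < i * length x")
    case True
    then show ?thesis by (simp add: s nth_append lc nth_concat_replicate)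
  next
    case False
    define j where "j = k - i * length x"
    have "j < length y" "k = j + i * length x" using k False s lc by (auto simp: j_def)
    then show ?thesis using y prefix_length_le[OF y] by (simp add: s nth_append lc prefix_nth)
  qed
qed

lemma factor_decompI:
  assumes x: "0 < length x" and xs: "length x \<le> length s"
    and nth: "\<forall>k<length s. s ! k = x ! (k mod length x)"
  shows "factor_decomp x s"
proof -
  define i where "i = length s div length x"
  define y where "y = take (length s mod length x) x"
  have lc: "length (concat (replicate i x)) = i * length x"
    by (simp add: length_concat sum_list_replicate)
  have "s = concat (replicate i x) @ y"
  proof (rule nth_equalityI)
    show "length s = length (concat (replicate i x) @ y)"
      using x by (simp add: lc y_def, simp add: i_def)
    fix k assume k: "k < length s"
    have "(concat (replicate i x) @ y) ! k = x ! (k mod length x)"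
    proof (cases "k < i * length x")
      case True
      then show ?thesis by (simp add: nth_append lc nth_concat_replicate)
    next
      case False
      have "i \<le> k div length x" using False x by (simp add: less_eq_div_iff_mult_less_eq)
      moreover have "k div length x \<le> i" unfolding i_def using k by (simp add: div_le_mono)
      ultimately have "k - i * length x = k mod length x"
        using minus_div_mult_eq_mod[of k "length x"] by simp
      moreover have "length s - i * length x = length s mod length x"
        unfolding i_def by (rule minus_div_mult_eq_mod)
      ultimately have "k mod length x < length s mod length x" using k False by linarith
      then show ?thesis
        using False \<open>k - i * length x = k mod length x\<close> by (simp add: nth_append lc y_def)
    qed
    moreover have "s ! k = x ! (k mod length x)" using nth k by blast
    ultimately show "s ! k = (concat (replicate i x) @ y) ! k" by (simp only:)
  qed
  moreover have "1 \<le> i" using x xs by (simp add: i_def less_eq_div_iff_mult_less_eq)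
  ultimately show "factor_decomp x s"
    unfolding factor_decomp_def y_def by (blast intro: take_is_prefix)
qed

lemma factor_decomp_factor: "factor_decomp (factor s) s"
  and period_le_length: "factor_decomp x s \<Longrightarrow> period s \<le> length x"
proof -
  have "factor_decomp s s"
    unfolding factor_decomp_def by (rule exI[of _ 1]) simp
  then show "factor_decomp (factor s) s" "factor_decomp x s \<Longrightarrow> period s \<le> length x"
    unfolding period_def factor_def by (auto dest: arg_min_nat_lemma)
qed

lemma
  assumes "s \<noteq> []"
  shows period_pos: "0 < period s"
    and nth_factor: "k < length s \<Longrightarrow> s ! k = factor s ! (k mod period s)"
  using factor_decompD[OF factor_decomp_factor assms] unfolding period_def by auto

lemma period_le:
  assumes "s \<noteq> []" "has_period s w" "0 < w"
  shows "period s \<le> w"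
proof (cases "w < length s")
  case True
  have "factor_decomp (take w s) s"
    using True assms has_period_nth_mod[OF assms(2,3)] by (intro factor_decompI) auto
  then show ?thesis using True period_le_length by fastforce
next
  case False
  have "factor_decomp s s"
    using assms(1) by (intro factor_decompI) auto
  then show ?thesis using False period_le_length by fastforce
qed

subsection \<open>Periodic words\<close>

definition occurs_at :: "(nat \<Rightarrow> 'a) \<Rightarrow> 'a list \<Rightarrow> nat \<Rightarrow> bool" where
  "occurs_at W x r \<longleftrightarrow> (\<forall>k<length x. x ! k = W (r + k))"

lemma occurs_at_sublist:
  assumes "occurs_at W y r" "sublist x y"
  shows "\<exists>r'. occurs_at W x r'"
proof -
  obtain u v where y: "y = u @ x @ v" using assms(2) unfolding sublist_def by blast
  have "x ! k = W (r + length u + k)" if "k < length x" for k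
  proof -
    have "x ! k = y ! (length u + k)" "length u + k < length y"
      using that by (simp_all add: y nth_append)
    then show ?thesis using assms(1) unfolding occurs_at_def by (simp add: add.assoc)
  qed
  then have "occurs_at W x (r + length u)" unfolding occurs_at_def by blast
  then show ?thesis ..
qed

lemma periodic_add_mult:
  fixes W :: "nat \<Rightarrow> 'a"
  assumes "\<forall>n. W (n + p) = W n"
  shows "W (n + m * p) = W n"
proof (induction m)
  case (Suc m)
  have "W (n + Suc m * p) = W ((n + m * p) + p)" by (simp add: ac_simps)
  also have "\<dots> = W n" using Suc assms by simp
  finally show ?case .
qed simp

lemma occurs_at_add_mult:
  fixes W :: "nat \<Rightarrow> 'a"
  shows "\<forall>n. W (n + p) = W n \<Longrightarrow> occurs_at W x (r + m * p) \<longleftrightarrow> occurs_at W x r"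
  unfolding occurs_at_def using periodic_add_mult[of W p "r + _" m] by (simp add: ac_simps)

lemma occurs_at_mod:
  assumes "\<forall>n. W (n + p) = W n" "occurs_at W x r"
  shows "occurs_at W x (r mod p)"
  using assms occurs_at_add_mult[OF assms(1), of x "r mod p" "r div p"] by simp

lemma prefix_if_occurs_at_same:
  assumes "occurs_at W x r" "occurs_at W y r" "length x \<le> length y"
  shows "prefix x y"
proof -
  have "take (length x) y = x"
    using assms unfolding occurs_at_def by (intro nth_equalityI) auto
  then show ?thesis by (metis take_is_prefix)
qed

text \<open>If the two occurrences overlap, \<open>y\<close> cannot end inside \<open>x\<close>, so the overlap is a suffix
  of \<open>x\<close> that is a prefix of \<open>y\<close>.\<close>

lemma dist_le_occurrence_gap:
  assumes x: "occurs_at W x r" and y: "occurs_at W y s" and "r < s"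
    and "y = x \<or> \<not> sublist y x"
  shows "dist x y \<le> s - r"
proof (cases "length x \<le> s - r")
  case True
  then show ?thesis unfolding dist_def by simp
next
  case False
  define k where "k = length x - (s - r)"
  have kx: "k < length x" using False \<open>r < s\<close> by (simp add: k_def)
  have ky: "k < length y"
  proof (rule ccontr)
    assume "\<not> k < length y"
    then have "take (length y) (drop (s - r) x) = y"
      using x y \<open>r < s\<close> False unfolding occurs_at_def k_def
      by (intro nth_equalityI) (auto simp: add.assoc)
    then have "sublist y x"
      by (metis append_take_drop_id sublist_appendI)
    moreover have "length y \<le> length x - (s - r)"
      using arg_cong[OF \<open>take (length y) (drop (s - r) x) = y\<close>, of length] by simp
    then have "y \<noteq> x" using \<open>r < s\<close> False by auto
    ultimately show False using assms(4) by blast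
  qed
  have "drop (length x - k) x = take k y"
    using x y \<open>r < s\<close> False kx ky unfolding occurs_at_def k_def
    by (intro nth_equalityI) (auto simp: add.assoc)
  then have "k \<le> ov x y" using kx ky by (rule ov_ge[rotated 2])
  then show ?thesis unfolding dist_def k_def using False by simp
qed

lemma equivalent_occur_in_periodic_word:
  assumes "equivalent a b" "a \<noteq> []" "b \<noteq> []"
  obtains W where "\<forall>n. W (n + period a) = W n" "occurs_at W a 0" "\<exists>r. occurs_at W b r"
proof -
  let ?p = "period a"
  obtain P Q where PQ: "factor a = P @ Q" "factor b = Q @ P"
    using assms(1) unfolding equivalent_def by blast
  define W where "W n = factor a ! (n mod ?p)" for n
  \<comment> \<open>\<open>b\<close> starts at offset \<open>length P\<close> since \<open>factor b\<close> is a rotation of \<open>factor a\<close>\<close>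
  have rot: "factor b = rotate (length P) (factor a)" by (simp add: PQ rotate_append)
  have pb: "period b = ?p" unfolding period_def by (simp add: PQ)
  have "\<forall>n. W (n + ?p) = W n" by (simp add: W_def)
  moreover have "occurs_at W a 0"
    unfolding occurs_at_def W_def using nth_factor[OF assms(2)] by simp
  moreover have "occurs_at W b (length P)"
    unfolding occurs_at_def W_def
  proof (intro allI impI)
    fix k assume "k < length b"
    then have "b ! k = factor a ! ((length P + k mod ?p) mod ?p)"
      using nth_factor[OF assms(3)] period_pos[OF assms(3)]
      by (simp add: pb rot nth_rotate period_def)
    then show "b ! k = factor a ! ((length P + k) mod ?p)" by (simp add: mod_add_right_eq)
  qed
  ultimately show ?thesis using that by blast
qed

lemma length_pref_chain_le_offsets:
  assumes "ps \<noteq> []" "sorted_wrt (<) (map snd ps)"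
    and "\<forall>(x, r)\<in>set ps. occurs_at W x r"
    and "\<forall>x\<in>fst ` set ps. \<forall>y\<in>fst ` set ps. x \<noteq> y \<longrightarrow> \<not> sublist y x"
  shows "length (pref_chain (map fst ps)) + snd (hd ps) \<le> snd (last ps)"
  using assms
proof (induction ps rule: induct_list012)
  case (3 a b zs)
  obtain x r y s where ab: "a = (x, r)" "b = (y, s)" by fastforce
  have "length (pref_chain (map fst (b # zs))) + s \<le> snd (last (b # zs))"
    using "3.IH"(2) "3.prems" ab by simp
  moreover have "dist x y \<le> s - r" "r < s"
    using "3.prems" ab by (auto intro!: dist_le_occurrence_gap)
  ultimately show ?case using ab by (simp add: length_pref)
qed simp_all

lemma periodic_word_offsets:
  assumes "0 < p" and W: "\<forall>n. W (n + p) = W n"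
    and occ: "\<forall>x\<in>V. \<exists>r. occurs_at W x r"
    and V: "\<forall>x\<in>V. \<forall>y\<in>V. x \<noteq> y \<longrightarrow> \<not> sublist x y"
  obtains g where "\<forall>x\<in>V. occurs_at W x (g x)" "\<forall>x. g x < p" "inj_on g V"
proof -
  define g where "g x = (SOME r. occurs_at W x r) mod p" for x
  have g: "occurs_at W x (g x)" if "x \<in> V" for x
  proof -
    have "\<exists>r. occurs_at W x r" using occ that by blast
    then have "occurs_at W x (SOME r. occurs_at W x r)" by (rule someI_ex)
    then show ?thesis unfolding g_def by (rule occurs_at_mod[OF W])
  qed
  moreover have "g x < p" for x
    unfolding g_def using \<open>0 < p\<close> by simp
  moreover have "inj_on g V"
  proof (rule inj_onI, rule ccontr)
    fix x y assume xy: "x \<in> V" "y \<in> V" "g x = g y" "x \<noteq> y"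
    have ox: "occurs_at W x (g x)" and oy: "occurs_at W y (g x)"
      using g[OF xy(1)] g[OF xy(2)] xy(3) by simp_all
    consider "length x \<le> length y" | "length y \<le> length x" by linarith
    then have "sublist x y \<or> sublist y x"
      by cases (simp_all add: prefix_imp_sublist prefix_if_occurs_at_same[OF ox oy]
          prefix_if_occurs_at_same[OF oy ox])
    moreover have "\<not> sublist x y" "\<not> sublist y x" using V xy(1,2,4) by simp_all
    ultimately show False by blast
  qed
  ultimately show ?thesis using that by blast
qed

text \<open>Sorting the strings by their offsets in one period and closing the cycle with the next
  occurrence of the first string, one period later, bounds the cycle weight by \<open>p\<close>.\<close>

lemma periodic_cycle_weight_le:
  fixes V :: "nuc list set"
  assumes "finite V" "V \<noteq> {}" "0 < p" and W: "\<forall>n. W (n + p) = W n"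
    and occ: "\<forall>x\<in>V. \<exists>r. occurs_at W x r"
    and V: "\<forall>x\<in>V. \<forall>y\<in>V. x \<noteq> y \<longrightarrow> \<not> sublist x y"
  obtains L where "distinct L" "set L = V" "cycle_weight L \<le> p"
proof -
  obtain g where g: "\<forall>x\<in>V. occurs_at W x (g x)" "\<forall>x. g x < p" "inj_on g V"
    using periodic_word_offsets[OF \<open>0 < p\<close> W occ V] by blast
  obtain L0 where "distinct L0" "set L0 = V" using \<open>finite V\<close> finite_distinct_list by blast
  define L where "L = sort_key g L0"
  have "distinct L" "set L = V"
    using \<open>distinct L0\<close> \<open>set L0 = V\<close> by (simp_all add: L_def)
  moreover have "L \<noteq> []" using \<open>set L = V\<close> \<open>V \<noteq> {}\<close> by auto
  ultimately have L: "distinct L" "set L = V" "L \<noteq> []" by blast+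
  have "sorted_wrt (<) (map g L)"
    using L g(3) by (auto simp: strict_sorted_iff L_def distinct_map)
  define ps where "ps = map (\<lambda>x. (x, g x)) L @ [(hd L, g (hd L) + p)]"
  have "length (pref_chain (map fst ps)) + snd (hd ps) \<le> snd (last ps)"
  proof (rule length_pref_chain_le_offsets)
    show "sorted_wrt (<) (map snd ps)"
      using \<open>sorted_wrt (<) (map g L)\<close> g(2)
      by (auto simp: ps_def sorted_wrt_append comp_def intro: less_le_trans[OF _ le_add2])
    show "\<forall>(x, r)\<in>set ps. occurs_at W x r"
      using g(1) L occurs_at_add_mult[OF W, of "hd L" "g (hd L)" 1] by (auto simp: ps_def)
    show "\<forall>x\<in>fst ` set ps. \<forall>y\<in>fst ` set ps. x \<noteq> y \<longrightarrow> \<not> sublist y x"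
      using V L by (auto simp: ps_def)
  qed (simp add: ps_def)
  then have "cycle_weight L \<le> p"
    using L by (simp add: ps_def cycle_weight_eq_length_pref_chain comp_def hd_map)
  then show ?thesis using L that by blast
qed

subsection \<open>Cycle covers\<close>

lemma comp_comp [simp]: "comp (comp n) = n"
  by (cases n) simp_all

lemma rc_rc [simp]: "rc (rc x) = x"
  unfolding rc_def by (simp add: rev_map comp_def)

lemma rc_inject [simp]: "rc x = rc y \<longleftrightarrow> x = y"
  by (metis rc_rc)

lemma sublist_rc: "sublist x y \<Longrightarrow> sublist (rc x) (rc y)"
  unfolding rc_def by (simp add: map_mono_sublist)

lemma rc_in_vertices: "x \<in> vertices S \<Longrightarrow> rc x \<in> vertices S"
  unfolding vertices_def by auto

definition orientation_choice :: "nuc list set \<Rightarrow> nuc list set \<Rightarrow> bool" where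
  "orientation_choice S U \<longleftrightarrow>
     (\<forall>s\<in>S. (s \<in> U \<or> rc s \<in> U) \<and> (s \<noteq> rc s \<longrightarrow> \<not> (s \<in> U \<and> rc s \<in> U)))"

lemma cycle_cover_iff:
  "cycle_cover S CC \<longleftrightarrow> finite CC \<and> (\<forall>c\<in>CC. is_cycle S c)
     \<and> (\<forall>c\<in>CC. \<forall>d\<in>CC. c \<noteq> d \<longrightarrow> set c \<inter> set d = {})
     \<and> orientation_choice S (\<Union>c\<in>CC. set c)"
  unfolding cycle_cover_def orientation_choice_def Let_def ..

lemma orientation_choice_rc_eq:
  assumes "orientation_choice S U" "U \<subseteq> vertices S" "x \<in> U" "rc x \<in> U"
  shows "rc x = x"
proof -
  obtain s where "s \<in> S" "x = s \<or> x = rc s"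
    using assms(2,3) unfolding vertices_def by blast
  then show ?thesis using assms(1,3,4) unfolding orientation_choice_def by force
qed

lemma orientation_choice_image:
  assumes U: "orientation_choice S U" "U \<subseteq> vertices S"
    and \<psi>: "\<forall>x\<in>U. \<psi> x = x \<or> \<psi> x = rc x"
  shows "orientation_choice S (\<psi> ` U)"
proof -
  have meets: "s \<in> \<psi> ` U \<or> rc s \<in> \<psi> ` U" if "s \<in> U \<or> rc s \<in> U" for s
    using that
  proof
    assume "s \<in> U"
    then have "\<psi> s \<in> \<psi> ` U \<and> (\<psi> s = s \<or> \<psi> s = rc s)" using \<psi> by auto
    then show ?thesis by auto
  next
    assume "rc s \<in> U"
    then have "\<psi> (rc s) \<in> \<psi> ` U \<and> (\<psi> (rc s) = rc s \<or> \<psi> (rc s) = s)" using \<psi> by auto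
    then show ?thesis by auto
  qed
  have no_both: "\<not> (s \<in> \<psi> ` U \<and> rc s \<in> \<psi> ` U)" if "s \<noteq> rc s" for s
  proof
    assume "s \<in> \<psi> ` U \<and> rc s \<in> \<psi> ` U"
    then obtain z1 z2 where z: "z1 \<in> U" "z2 \<in> U" "s = \<psi> z1" "rc s = \<psi> z2"
      by (meson imageE)
    have "\<psi> z1 = z1 \<or> \<psi> z1 = rc z1" "\<psi> z2 = z2 \<or> \<psi> z2 = rc z2" using \<psi> z(1,2) by blast+
    then have "z1 = s \<or> z1 = rc s" "z2 = s \<or> z2 = rc s" using z(3,4) by auto
    moreover have "z1 \<noteq> z2" using z(3,4) that by auto
    ultimately have "s \<in> U" "rc s \<in> U" using z(1,2) by auto
    then have "rc s = s" by (rule orientation_choice_rc_eq[OF U])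
    then show False using that by simp
  qed
  have "s \<in> U \<or> rc s \<in> U" if "s \<in> S" for s
    using U(1) that unfolding orientation_choice_def by simp
  then show ?thesis
    unfolding orientation_choice_def using meets no_both by simp
qed

lemma reorient_in_vertices:
  assumes "A \<subseteq> vertices S" "\<forall>x\<in>A. \<psi> x = x \<or> \<psi> x = rc x"
  shows "\<psi> ` A \<subseteq> vertices S"
proof
  fix y assume "y \<in> \<psi> ` A"
  then obtain x where "x \<in> A" "y = \<psi> x" by blast
  moreover have "\<psi> x = x \<or> \<psi> x = rc x" using assms(2) \<open>x \<in> A\<close> by blast
  ultimately show "y \<in> vertices S" using assms(1) rc_in_vertices by auto
qed

lemma orientation_choice_reorient_disjoint:
  assumes U: "orientation_choice S U" "U \<subseteq> vertices S"
    and AB: "A \<subseteq> U" "B \<subseteq> U" "A \<inter> B = {}"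
    and \<psi>: "\<forall>x\<in>A. \<psi> x = x \<or> \<psi> x = rc x"
  shows "\<psi> ` A \<inter> B = {}"
proof -
  have "\<psi> x \<notin> B" if "x \<in> A" for x
  proof
    assume "\<psi> x \<in> B"
    moreover have "\<psi> x = x \<or> \<psi> x = rc x" using \<psi> that by blast
    moreover have "x \<in> U" using that AB(1) by blast
    ultimately have "\<psi> x = x"
      using AB(2) orientation_choice_rc_eq[OF U \<open>x \<in> U\<close>] by auto
    then show False using \<open>\<psi> x \<in> B\<close> that AB(3) by auto
  qed
  then show ?thesis by blast
qed

lemma cycle_cover_replace_two:
  assumes cc: "cycle_cover S CC" and cd: "c \<in> CC" "d \<in> CC" "c \<noteq> d"
    and \<psi>: "\<forall>x\<in>set c \<union> set d. \<psi> x = x \<or> \<psi> x = rc x"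
    and L: "distinct L" "set L = \<psi> ` (set c \<union> set d)"
  defines "R \<equiv> CC - {c, d}"
  shows "cycle_cover S (insert L R)" and "L \<notin> R"
proof -
  define U where "U = (\<Union>e\<in>CC. set e)"
  define \<psi>' where "\<psi>' x = (if x \<in> set c \<union> set d then \<psi> x else x)" for x
  have cyc: "\<forall>e\<in>CC. is_cycle S e"
    and disj: "\<forall>e\<in>CC. \<forall>e'\<in>CC. e \<noteq> e' \<longrightarrow> set e \<inter> set e' = {}"
    and U_choice: "orientation_choice S U"
    using cc unfolding cycle_cover_iff U_def by simp_all
  have U_vert: "U \<subseteq> vertices S" using cyc unfolding U_def is_cycle_def by blast
  have U: "U = (set c \<union> set d) \<union> (\<Union>e\<in>R. set e)" unfolding U_def R_def using cd by blast
  have disj_cd: "set e \<inter> (set c \<union> set d) = {}" if "e \<in> R" for e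
  proof -
    have "e \<in> CC" "e \<noteq> c" "e \<noteq> d" using that unfolding R_def by auto
    then show ?thesis using disj cd by auto
  qed
  have disj_L: "set L \<inter> set e = {}" if "e \<in> R" for e
    unfolding L(2) using U_choice U_vert _ _ _ \<psi>
    by (rule orientation_choice_reorient_disjoint) (use that disj_cd in \<open>auto simp: U\<close>)
  have "L \<noteq> []" using L(2) cd cyc unfolding is_cycle_def by auto
  show "L \<notin> R"
  proof
    assume "L \<in> R"
    then have "set L \<inter> set L = {}" by (rule disj_L)
    then show False using \<open>L \<noteq> []\<close> by simp
  qed
  have "set L \<subseteq> vertices S"
    unfolding L(2) using _ \<psi> by (rule reorient_in_vertices) (use U_vert in \<open>simp add: U\<close>)
  then have "is_cycle S L" using \<open>L \<noteq>[]\<close> L(1) unfolding is_cycle_def by blast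
  moreover have "finite (insert L R)" using cc unfolding cycle_cover_def R_def by simp
  moreover have "\<forall>e\<in>insert L R. \<forall>e'\<in>insert L R. e \<noteq> e' \<longrightarrow> set e \<inter> set e' = {}"
    using disj disj_L unfolding R_def by blast
  moreover have "(\<Union>e\<in>insert L R. set e) = \<psi>' ` U"
  proof -
    have "\<psi>' x = x" if "x \<in> (\<Union>e\<in>R. set e)" for x
      using that disj_cd unfolding \<psi>'_def by auto
    then have "\<psi>' ` (\<Union>e\<in>R. set e) = (\<Union>e\<in>R. set e)" by simp
    moreover have "\<psi>' ` (set c \<union> set d) = set L" unfolding L(2) \<psi>'_def by simp
    ultimately show ?thesis unfolding U image_Un by simp
  qed
  moreover have "\<forall>x\<in>U. \<psi>' x = x \<or> \<psi>' x = rc x" using \<psi> unfolding \<psi>'_def by simp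
  ultimately show "cycle_cover S (insert L R)"
    using cyc orientation_choice_image[OF U_choice U_vert]
    unfolding cycle_cover_iff R_def by auto
qed

lemma optimal_cycle_cover_replace_two:
  assumes opt: "optimal_cycle_cover S CC" and cd: "c \<in> CC" "d \<in> CC" "c \<noteq> d"
    and \<psi>: "\<forall>x\<in>set c \<union> set d. \<psi> x = x \<or> \<psi> x = rc x"
    and L: "distinct L" "set L = \<psi> ` (set c \<union> set d)"
  shows "cycle_weight c + cycle_weight d \<le> cycle_weight L"
proof -
  define R where "R = CC - {c, d}"
  have cc: "cycle_cover S CC" using opt unfolding optimal_cycle_cover_def by blast
  then have "finite R" unfolding R_def cycle_cover_def by blast
  have "CC = insert c (insert d R)" "c \<notin> insert d R" "d \<notin> R"
    unfolding R_def using cd by auto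
  then have "cycle_weight c + cycle_weight d + sum cycle_weight R = cover_weight CC"
    using \<open>finite R\<close> unfolding cover_weight_def by simp
  also have "\<dots> \<le> cover_weight (insert L R)"
    using opt cycle_cover_replace_two(1)[OF cc cd \<psi> L]
    unfolding optimal_cycle_cover_def R_def by blast
  also have "\<dots> = cycle_weight L + sum cycle_weight R"
    using cycle_cover_replace_two(2)[OF cc cd \<psi> L] \<open>finite R\<close>
    unfolding cover_weight_def R_def by simp
  finally show ?thesis by simp
qed

lemma optimal_cycle_cover_no_short_periodic_word:
  assumes sf: "substring_free S" and opt: "optimal_cycle_cover S CC"
    and cd: "c \<in> CC" "d \<in> CC" "c \<noteq> d"
    and \<psi>: "\<forall>x\<in>set c \<union> set d. \<psi> x = x \<or> \<psi> x = rc x"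
    and W: "\<forall>n. W (n + p) = W n" and "0 < p" and p: "p < cycle_weight c + cycle_weight d"
    and occ: "\<forall>x\<in>set c \<union> set d. \<exists>r. occurs_at W (\<psi> x) r"
  shows False
proof -
  define V where "V = \<psi> ` (set c \<union> set d)"
  have cyc: "is_cycle S c" "is_cycle S d"
    using opt cd unfolding optimal_cycle_cover_def cycle_cover_def by auto
  have "V \<subseteq> vertices S"
    unfolding V_def using _ \<psi> by (rule reorient_in_vertices) (use cyc in \<open>auto simp: is_cycle_def\<close>)
  then have "\<forall>x\<in>V. \<forall>y\<in>V. x \<noteq> y \<longrightarrow> \<not> sublist x y"
    using sf unfolding substring_free_def by blast
  moreover have "finite V" "V \<noteq> {}" using cyc unfolding V_def is_cycle_def by auto
  moreover have "\<forall>x\<in>V. \<exists>r. occurs_at W x r" using occ unfolding V_def by blast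
  ultimately obtain L where L: "distinct L" "set L = V" "cycle_weight L \<le> p"
    using periodic_cycle_weight_le[OF _ _ \<open>0 < p\<close> W] by blast
  have "cycle_weight c + cycle_weight d \<le> cycle_weight L"
    using optimal_cycle_cover_replace_two[OF opt cd \<psi> L(1)] L(2) unfolding V_def by blast
  then show False using L(3) p by simp
qed

lemma cycle_cover_strings_nonempty:
  assumes sf: "substring_free S" and cc: "cycle_cover S CC"
    and cd: "c \<in> CC" "d \<in> CC" "c \<noteq> d"
  shows "\<forall>z\<in>set c \<union> set d. z \<noteq> []"
proof
  fix z assume z: "z \<in> set c \<union> set d"
  have cyc: "c \<noteq> []" "d \<noteq> []" "set c \<union> set d \<subseteq> vertices S"
    and "set c \<inter> set d = {}"
    using cc cd unfolding cycle_cover_def is_cycle_def by auto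
  then have "hd c \<in> set c" "hd d \<in> set d" by simp_all
  moreover from this have "hd c \<noteq> hd d" using \<open>set c \<inter> set d = {}\<close> by (auto simp: disjoint_iff)
  ultimately obtain y where "y \<in> set c \<union> set d" "y \<noteq> z" by auto
  moreover have "y \<in> vertices S" "z \<in> vertices S" using calculation(1) z cyc(3) by auto
  ultimately have "\<not> sublist z y" using sf unfolding substring_free_def by auto
  then show "z \<noteq> []" by auto
qed

definition orient :: "bool \<Rightarrow> nuc list \<Rightarrow> nuc list" where
  "orient b x = (if b then rc x else x)"

lemma
  assumes "c \<noteq> []" "\<forall>z\<in>set c. z \<noteq> []"
  shows has_period_orient_merge:
      "has_period (orient u (merge (rotate i c))) (cycle_weight c)"
    and sublist_orient_merge:
      "x \<in> set c \<Longrightarrow> sublist (orient u x) (orient u (merge (rotate i c)))"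
    and orient_merge_ne_Nil: "orient u (merge (rotate i c)) \<noteq> []"
proof -
  have "has_period (merge (rotate i c)) (cycle_weight c)"
    using has_period_merge[of "rotate i c"] assms by (simp add: cycle_weight_rotate)
  then show "has_period (orient u (merge (rotate i c))) (cycle_weight c)"
    unfolding orient_def by (simp add: has_period_rc)
  show sub: "sublist (orient u x) (orient u (merge (rotate i c)))" if "x \<in> set c" for x
    using sublist_merge[of "rotate i c" x] assms that unfolding orient_def
    by (simp add: sublist_rc)
  have "orient u (hd c) \<noteq> []" using assms unfolding orient_def rc_def by simp
  then show "orient u (merge (rotate i c)) \<noteq> []"
    using sub[of "hd c"] assms(1) by auto
qed

lemma merges_not_equivalent:
  assumes sf: "substring_free S" and opt: "optimal_cycle_cover S CC"
    and cd: "c \<in> CC" "d \<in> CC" "c \<noteq> d"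
  shows "\<not> equivalent (orient u (merge (rotate i c))) (orient v (merge (rotate j d)))"
proof
  define a where "a = orient u (merge (rotate i c))"
  define b where "b = orient v (merge (rotate j d))"
  assume "equivalent a b"
  have cc: "cycle_cover S CC" using opt unfolding optimal_cycle_cover_def by blast
  then have cyc: "c \<noteq> []" "d \<noteq> []" using cd unfolding cycle_cover_def is_cycle_def by auto
  have ne: "\<forall>z\<in>set c. z \<noteq> []" "\<forall>z\<in>set d. z \<noteq> []"
    using cycle_cover_strings_nonempty[OF sf cc cd] by simp_all
  have a: "has_period a (cycle_weight c)" "\<And>x. x \<in> set c \<Longrightarrow> sublist (orient u x) a" "a \<noteq> []"
    using has_period_orient_merge[OF cyc(1) ne(1)] sublist_orient_merge[OF cyc(1) ne(1)]
      orient_merge_ne_Nil[OF cyc(1) ne(1)] unfolding a_def by auto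
  have b: "\<And>x. x \<in> set d \<Longrightarrow> sublist (orient v x) b" "b \<noteq> []"
    using sublist_orient_merge[OF cyc(2) ne(2)] orient_merge_ne_Nil[OF cyc(2) ne(2)]
    unfolding b_def by auto
  obtain W where W: "\<forall>n. W (n + period a) = W n" "occurs_at W a 0" "\<exists>r. occurs_at W b r"
    using equivalent_occur_in_periodic_word[OF \<open>equivalent a b\<close> a(3) b(2)] .
  have p: "0 < period a" "period a < cycle_weight c + cycle_weight d"
    using period_pos[OF a(3)] period_le[OF a(3,1)] cycle_weight_pos[OF cyc(1) ne(1)]
      cycle_weight_pos[OF cyc(2) ne(2)] by auto
  define \<psi> where "\<psi> x = (if x \<in> set c then orient u x else orient v x)" for x
  have \<psi>: "\<forall>x\<in>set c \<union> set d. \<psi> x = x \<or> \<psi> x = rc x"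
    unfolding \<psi>_def orient_def by simp
  have "\<exists>r. occurs_at W (\<psi> x) r" if "x \<in> set c \<union> set d" for x
  proof (cases "x \<in> set c")
    case True
    then show ?thesis
      using occurs_at_sublist[OF W(2) a(2)[OF True]] by (simp add: \<psi>_def)
  next
    case False
    with that have "x \<in> set d" by simp
    obtain r where "occurs_at W b r" using W(3) ..
    then show ?thesis using occurs_at_sublist[OF _ b(1)[OF \<open>x \<in> set d\<close>]] False
      by (simp add: \<psi>_def)
  qed
  then show False
    using optimal_cycle_cover_no_short_periodic_word[OF sf opt cd \<psi> W(1) p] by blast
qed

theorem lemma11:
  fixes S :: "nuc list set" and CC :: "nuc list list set"
    and c0 d0 :: "nuc list list" and i j :: nat
  assumes "finite S"
    and "substring_free S"
    and "optimal_cycle_cover S CC"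
    and "c0 \<in> CC" and "d0 \<in> CC" and "c0 \<noteq> d0"
  defines "e \<equiv> merge (rotate i c0)" and "f \<equiv> merge (rotate j d0)"
  shows "\<not> equivalent e f \<and> \<not> equivalent e (rc f)
         \<and> \<not> equivalent (rc e) f \<and> \<not> equivalent (rc e) (rc f)"
proof -
  have "\<not> equivalent (orient u e) (orient v f)" for u v
    unfolding e_def f_def using assms(2-6) by (rule merges_not_equivalent)
  from this[of False False] this[of False True] this[of True False] this[of True True]
  show ?thesis unfolding orient_def by simp
qed

end
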